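(* Let $K\in\mathcal T_h^B$, let $j\ge0$ be an integer and $v\in P_j(K)$, extended as the same polynomial to the regions $M_e$, $e\subset\partial K\cap\partial\Omega_h$. Then $$\sum_{e\subset\partial K\cap\partial\Omega_h}\|v\|_{0,M_e}^2\lesssim h^{-1}s^2\|v\|_{0,K}^2,$$ with hidden constant independent of $h$, $s$ and $v$.
   Context: Let $\Omega\subset\mathbb R^2$ be a bounded convex domain with Lipschitz, possibly curved boundary $\partial\Omega$ and unit outward normal $\widetilde{\mathbf n}$. $\mathcal T_h$ is a partition into polygons which is body-fitted: each boundary edge has both endpoints on $\partial\Omega$; $\overline{\Omega_h}=\bigcup_{K\in\mathcal T_h}K$. $h_K$ = diameter of $K$, $h=\max_Kh_K$ (assumed $\le O(1)$); $\mathbf n$ denotes the unit outward normal on $\partial\Omega_h$. $\mathcal E_h^B$ is the set of boundary edges, $h_e$ the length of $e$, $s=\max_{e\in\mathcal E_h^B}h_e$ ($s\le h$). For $e\in\mathcal E_h^B$, $\tilde e\subset\partial\Omega$ is the arc between the endpoints of $e$ and $M_e$ the region bounded by $e$ and $\tilde e$. $\mathcal T_h^B$ = elements with at least one edge in $\mathcal E_h^B$. The meshes satisfy, with mesh-independent constants: (A1) each $K$ is star-shaped w.r.t. a ball $\mathcal B_K\subset K$ of radius $\rho_K\ge C_1h_K$; (A2) each $K$ has an edge with $h_e\ge C_2h_K$; (A3) $h\le C_3h_K$ for all $K$; (A4) for each $e\in\mathcal E_h^B$, in local Cartesian coordinates $(\hat x,\hat y)$ with $e=[0,h_e]\times\{0\}$,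 $\Gamma(\hat x,0)=(\hat x,\gamma(\hat x))$ is a bijection $e\to\tilde e$ with $\sup|\gamma|\le C_4s^2$ and $\sup_{\hat x}|\mathbf n(\hat x,0)-\widetilde{\mathbf n}(\hat x,\gamma(\hat x))|\le C_4's$; (A5) $s\le C_5\min_{e\in\mathcal E_h^B}h_e$; (A6) for each $e\in\mathcal E_h^B$ with element $K$, the triangle $P(e)$ with base $e$ and apex the center of $\mathcal B_K$ (height $h_{K,e}$), mapped by $\hat{\mathbf x}\mapsto\mathrm{diag}(h_e^{-1},h_{K,e}^{-1})\hat{\mathbf x}$ in coordinates with $e$ on the abscissa and the height on the ordinate, becomes a triangle of diameter $O(1)$ with circumradius/inradius ratio $\le C_6$; and each point of $K$ lies in at most $M$ triangles $P(e)$, $e\subset\partial K\cap\partial\Omega_h$. $x\lesssim y$ means $x\le Cy$ with $C$ independent of $h$, $s$ and the functions involved (it may depend on $j$ and the constants above). *)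

theory Defs
  imports "HOL-Analysis.Analysis"
begin

type_synonym pt = "real^2"

definition Pj :: "nat \<Rightarrow> (pt \<Rightarrow> real) set" where
  "Pj j = {v. \<exists>c :: nat \<Rightarrow> nat \<Rightarrow> real.
      \<forall>x. v x = (\<Sum>a\<le>j. \<Sum>b\<le>j - a. c a b * (x$1) ^ a * (x$2) ^ b)}"

definition L2sq :: "(pt \<Rightarrow> real) \<Rightarrow> pt set \<Rightarrow> real" where
  "L2sq v S = integral S (\<lambda>x. (v x)\<^sup>2)"

definition vtx :: "pt list \<Rightarrow> nat \<Rightarrow> pt" where
  "vtx vs i = vs ! (i mod length vs)"

definition edge :: "pt list \<Rightarrow> nat \<Rightarrow> pt set" where
  "edge vs i = closed_segment (vtx vs i) (vtx vs (Suc i))"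

definition edges :: "pt list \<Rightarrow> pt set set" where
  "edges vs = edge vs ` {..<length vs}"

definition pboundary :: "pt list \<Rightarrow> pt set" where
  "pboundary vs = \<Union>(edges vs)"

definition simple_polygon :: "pt list \<Rightarrow> bool" where
  "simple_polygon vs \<longleftrightarrow> length vs \<ge> 3 \<and> distinct vs \<and>
     (\<forall>i<length vs. \<forall>k<length vs. i \<noteq> k \<longrightarrow>
        edge vs i \<inter> edge vs k \<subseteq> {vtx vs i, vtx vs (Suc i)} \<inter> {vtx vs k, vtx vs (Suc k)})"

definition polyreg :: "pt list \<Rightarrow> pt set" where
  "polyreg vs = pboundary vs \<union> inside (pboundary vs)"

definition outward_edge_normal :: "pt set \<Rightarrow> pt \<Rightarrow> pt \<Rightarrow> pt \<Rightarrow> bool" where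
  "outward_edge_normal K a b n \<longleftrightarrow> norm n = 1 \<and> n \<bullet> (b - a) = 0 \<and>
     (\<exists>\<epsilon>>0. \<forall>t. 0 < t \<and> t < \<epsilon> \<longrightarrow> midpoint a b - t *\<^sub>R n \<in> K \<and> midpoint a b + t *\<^sub>R n \<notin> K)"

definition outward_normal :: "pt set \<Rightarrow> pt \<Rightarrow> pt \<Rightarrow> bool" where
  "outward_normal \<Omega> p nn \<longleftrightarrow> p \<in> frontier \<Omega> \<and> norm nn = 1 \<and> (\<forall>y\<in>\<Omega>. (y - p) \<bullet> nn \<le> 0)"

definition boundary_arc :: "pt set \<Rightarrow> pt \<Rightarrow> pt \<Rightarrow> pt set \<Rightarrow> bool" where
  "boundary_arc \<Omega> a b A \<longleftrightarrow> A \<subseteq> frontier \<Omega> \<and>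
     (\<exists>g. arc g \<and> pathstart g = a \<and> pathfinish g = b \<and> path_image g = A)"

definition bounded_region :: "pt set \<Rightarrow> pt set \<Rightarrow> pt set" where
  "bounded_region e A = e \<union> A \<union> inside (e \<union> A)"

definition cross2 :: "pt \<Rightarrow> pt \<Rightarrow> real" where
  "cross2 u w = u$1 * w$2 - u$2 * w$1"

definition tri_area :: "pt \<Rightarrow> pt \<Rightarrow> pt \<Rightarrow> real" where
  "tri_area p q r = \<bar>cross2 (q - p) (r - p)\<bar> / 2"

definition circumradius :: "pt \<Rightarrow> pt \<Rightarrow> pt \<Rightarrow> real" where
  "circumradius p q r = dist q r * dist p r * dist p q / (4 * tri_area p q r)"

definition inradius :: "pt \<Rightarrow> pt \<Rightarrow> pt \<Rightarrow> real" where
  "inradius p q r = 2 * tri_area p q r / (dist q r + dist p r + dist p q)"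

text \<open>Mesh data: domain Omega, finite set T of elements, vertex lists VL K,
  ball centres cB K and radii rB K (A1), and a choice of arc arcOf e of the
  boundary of Omega for every boundary edge e.\<close>

definition mesh_Omh :: "pt set set \<Rightarrow> pt set" where
  "mesh_Omh T = \<Union>T"

definition mesh_h :: "pt set set \<Rightarrow> real" where
  "mesh_h T = Max (diameter ` T)"

definition bedges_of :: "pt set set \<Rightarrow> pt list \<Rightarrow> pt set set" where
  "bedges_of T vs = {e \<in> edges vs. e \<subseteq> frontier (\<Union>T)}"

definition mesh_EB :: "pt set set \<Rightarrow> (pt set \<Rightarrow> pt list) \<Rightarrow> pt set set" where
  "mesh_EB T VL = (\<Union>K\<in>T. bedges_of T (VL K))"

definition mesh_s :: "pt set set \<Rightarrow> (pt set \<Rightarrow> pt list) \<Rightarrow> real" where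
  "mesh_s T VL = Max (diameter ` mesh_EB T VL)"

definition mesh_TB :: "pt set set \<Rightarrow> (pt set \<Rightarrow> pt list) \<Rightarrow> pt set set" where
  "mesh_TB T VL = {K \<in> T. bedges_of T (VL K) \<noteq> {}}"

definition admissible_mesh ::
  "real \<Rightarrow> real \<Rightarrow> real \<Rightarrow> real \<Rightarrow> real \<Rightarrow> real \<Rightarrow> real \<Rightarrow> nat \<Rightarrow> real \<Rightarrow>
   pt set \<Rightarrow> pt set set \<Rightarrow> (pt set \<Rightarrow> pt list) \<Rightarrow> (pt set \<Rightarrow> pt) \<Rightarrow> (pt set \<Rightarrow> real) \<Rightarrow>
   (pt set \<Rightarrow> pt set) \<Rightarrow> bool" where
  "admissible_mesh C1 C2 C3 C4 C4' C5 C6 M H0 \<Omega> T VL cB rB arcOf \<longleftrightarrow>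
    \<comment> \<open>Omega: bounded convex domain\<close>
    open \<Omega> \<and> \<Omega> \<noteq> {} \<and> convex \<Omega> \<and> bounded \<Omega> \<and>
    \<comment> \<open>partition into simple polygons with pairwise disjoint interiors\<close>
    finite T \<and> T \<noteq> {} \<and>
    (\<forall>K\<in>T. simple_polygon (VL K) \<and> K = polyreg (VL K)) \<and>
    (\<forall>K\<in>T. \<forall>K'\<in>T. K \<noteq> K' \<longrightarrow> interior K \<inter> interior K' = {}) \<and>
    \<comment> \<open>h = O(1)\<close>
    mesh_h T \<le> H0 \<and>
    \<comment> \<open>body-fitted: endpoints of boundary edges lie on the boundary of Omega\<close>
    (\<forall>K\<in>T. \<forall>i<length (VL K). edge (VL K) i \<subseteq> frontier (\<Union>T) \<longrightarrow>
        vtx (VL K) i \<in> frontier \<Omega> \<and> vtx (VL K) (Suc i) \<in> frontier \<Omega>) \<and>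
    \<comment> \<open>arcs: arcOf e is the arc of the boundary of Omega between the endpoints of e\<close>
    (\<forall>K\<in>T. \<forall>i<length (VL K). edge (VL K) i \<subseteq> frontier (\<Union>T) \<longrightarrow>
        boundary_arc \<Omega> (vtx (VL K) i) (vtx (VL K) (Suc i)) (arcOf (edge (VL K) i))) \<and>
    \<comment> \<open>(A1)\<close>
    (\<forall>K\<in>T. 0 < rB K \<and> rB K \<ge> C1 * diameter K \<and> ball (cB K) (rB K) \<subseteq> K \<and>
        (\<forall>x\<in>K. \<forall>y\<in>ball (cB K) (rB K). closed_segment x y \<subseteq> K)) \<and>
    \<comment> \<open>(A2)\<close>
    (\<forall>K\<in>T. \<exists>e\<in>edges (VL K). diameter e \<ge> C2 * diameter K) \<and>
    \<comment> \<open>(A3)\<close>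
    (\<forall>K\<in>T. mesh_h T \<le> C3 * diameter K) \<and>
    \<comment> \<open>(A4), written in global coordinates: local frame with origin a, abscissa direction
        tau = (b-a)/h_e and ordinate direction nu\<close>
    (\<forall>K\<in>T. \<forall>i<length (VL K). edge (VL K) i \<subseteq> frontier (\<Union>T) \<longrightarrow>
       (let a = vtx (VL K) i; b = vtx (VL K) (Suc i); he = dist a b;
            \<tau> = (1 / he) *\<^sub>R (b - a) in
        \<exists>\<nu> \<gamma> n. norm \<nu> = 1 \<and> \<nu> \<bullet> \<tau> = 0 \<and> outward_edge_normal K a b n \<and>
          bij_betw (\<lambda>t. a + t *\<^sub>R \<tau> + \<gamma> t *\<^sub>R \<nu>) {0..he} (arcOf (edge (VL K) i)) \<and>
          (\<forall>t\<in>{0..he}. \<bar>\<gamma> t\<bar> \<le> C4 * (mesh_s T VL)\<^sup>2) \<and>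
          (\<forall>t\<in>{0..he}. \<exists>nn. outward_normal \<Omega> (a + t *\<^sub>R \<tau> + \<gamma> t *\<^sub>R \<nu>) nn \<and>
                              norm (n - nn) \<le> C4' * mesh_s T VL))) \<and>
    \<comment> \<open>(A5)\<close>
    (\<forall>e\<in>mesh_EB T VL. mesh_s T VL \<le> C5 * diameter e) \<and>
    \<comment> \<open>(A6)\<close>
    (\<forall>K\<in>T. \<forall>i<length (VL K). edge (VL K) i \<subseteq> frontier (\<Union>T) \<longrightarrow>
       (let a = vtx (VL K) i; b = vtx (VL K) (Suc i); he = dist a b;
            \<tau> = (1 / he) *\<^sub>R (b - a); c = cB K;
            hKe = infdist c (affine hull {a, b});
            p = vector [0, 0] :: pt; q = vector [1, 0] :: pt;
            r = vector [((c - a) \<bullet> \<tau>) / he, 1] :: pt in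
        hKe > 0 \<and> diameter (convex hull {p, q, r}) \<le> C6 \<and>
        circumradius p q r / inradius p q r \<le> C6)) \<and>
    (\<forall>K\<in>T. \<forall>x\<in>K. card {i. i < length (VL K) \<and> edge (VL K) i \<subseteq> frontier (\<Union>T) \<and>
        x \<in> convex hull {vtx (VL K) i, vtx (VL K) (Suc i), cB K}} \<le> M)"

end

theory Submission
  imports Defs "HOL-Computational_Algebra.Polynomial"
begin

text \<open>
  Let B(c, r) be the ball of (A1) in K, so r \<ge> C1 h_K. Every v in P_j satisfies the inverse
  estimate v(x)^2 \<le> C r^-2 ||v||_{0,K}^2 for all x within O(h_K) of c. In one variable this
  follows from Lagrange interpolation at j + 1 well separated nodes at which v^2 is at most its
  mean; in two variables from the one-variable case on a square inside the ball and Fubini.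
  By (A4) each region M_e lies in a rectangle over e of width 2 C4 s^2, so it has area at most
  2 C4 s^2 h_K and, as s^2 = O(h_K) by (A5), it lies within O(h_K) of c. Summing over the at
  most M boundary edges of K (A6) and using h \<le> C3 h_K gives the claim.
\<close>

lemma integrable_continuous_compact:
  fixes f :: "'a::euclidean_space \<Rightarrow> real"
  assumes cont: "continuous_on S f" and S: "compact S"
  shows "f integrable_on S"
proof -
  obtain B where B: "\<And>x. x \<in> S \<Longrightarrow> \<bar>f x\<bar> \<le> B"
    using compact_imp_bounded[OF compact_continuous_image[OF cont S]]
    unfolding bounded_iff by auto
  have "S \<in> lmeasurable"
    by (rule lmeasurable_compact[OF S])
  show ?thesis
  proof (rule measurable_bounded_by_integrable_imp_integrable_real)
    show "f \<in> borel_measurable (lebesgue_on S)"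
      using \<open>S \<in> lmeasurable\<close> by (intro continuous_imp_measurable_on_sets_lebesgue[OF cont]) auto
    show "(\<lambda>_. B) integrable_on S"
      using \<open>S \<in> lmeasurable\<close> by (rule integrable_on_const)
  qed (use B \<open>S \<in> lmeasurable\<close> in auto)
qed

lemma L2sq_nonneg: "0 \<le> L2sq v S"
  unfolding L2sq_def
  by (cases "(\<lambda>x. (v x)\<^sup>2) integrable_on S") (auto intro: integral_nonneg simp: not_integrable_integral)

lemma integral_le_bound_mult_measure:
  fixes f :: "'a::euclidean_space \<Rightarrow> real"
  assumes "S \<subseteq> R" and R: "compact R" and cont: "continuous_on R f"
    and nonneg: "\<And>x. x \<in> R \<Longrightarrow> 0 \<le> f x" and bound: "\<And>x. x \<in> R \<Longrightarrow> f x \<le> B"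
  shows "integral S f \<le> B * measure lebesgue R"
proof (cases "f integrable_on S")
  case True
  have "R \<in> lmeasurable"
    by (rule lmeasurable_compact[OF R])
  have "integral S f \<le> integral R f"
    using True assms(1) nonneg by (intro integral_subset_le integrable_continuous_compact[OF cont R]) auto
  also have "\<dots> \<le> integral R (\<lambda>_. B)"
    using bound \<open>R \<in> lmeasurable\<close>
    by (intro integral_le integrable_continuous_compact[OF cont R] integrable_on_const) auto
  also have "\<dots> = B * integral R (\<lambda>_. 1)"
    using integral_mult_right[of R B "\<lambda>_. 1"] by simp
  also have "\<dots> = B * measure lebesgue R"
    using \<open>R \<in> lmeasurable\<close> by (simp add: lmeasure_integral)
  finally show ?thesis .
next
  case False
  show ?thesis
  proof (cases "R = {}")
    case False
    then obtain x where "x \<in> R" by blast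
    then have "0 \<le> B" using nonneg bound by (meson order_trans)
    then show ?thesis
      using \<open>\<not> f integrable_on S\<close> by (simp add: not_integrable_integral)
  qed (use \<open>\<not> f integrable_on S\<close> in \<open>simp add: not_integrable_integral\<close>)
qed

lemma vector2_eta: "vector [x$1, x$2] = (x :: real^2)"
  by (simp add: vec_eq_iff forall_2)

lemma vector2_eq_scaleR_axis: "(vector [t, u] :: real^2) = t *\<^sub>R axis 1 1 + u *\<^sub>R axis 2 1"
  by (simp add: vec_eq_iff forall_2 axis_def)

lemma integral_cbox_vector2_iterated:
  fixes f :: "real^2 \<Rightarrow> real"
  assumes cont: "continuous_on (cbox a b) f"
  shows "integral (cbox a b) f = integral {a$1..b$1} (\<lambda>t. integral {a$2..b$2} (\<lambda>u. f (vector [t, u])))"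
proof -
  define g :: "real \<times> real \<Rightarrow> real^2" where "g p = vector [fst p, snd p]" for p
  define h :: "real^2 \<Rightarrow> real \<times> real" where "h x = (x$1, x$2)" for x
  have hg: "h (g p) = p" for p
    by (simp add: g_def h_def)
  have gh: "g (h x) = x" for x
    by (simp add: g_def h_def vector2_eta)
  have mem_g: "x \<in> cbox (g p) (g q) \<longleftrightarrow> h x \<in> cbox p q" for x p q
    by (cases p; cases q) (auto simp: cbox_Pair_eq mem_box_cart forall_2 g_def h_def cbox_interval less_eq_vec_def)
  have g_box: "g ` cbox p q = cbox (g p) (g q)" for p q
  proof (rule set_eqI)
    fix x
    have "x \<in> g ` cbox p q \<longleftrightarrow> h x \<in> cbox p q"
      by (metis gh hg image_iff)
    then show "x \<in> g ` cbox p q \<longleftrightarrow> x \<in> cbox (g p) (g q)"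
      by (simp add: mem_g)
  qed
  have h_box: "h ` cbox p q = cbox (h p) (h q)" for p q
  proof (rule set_eqI)
    fix y
    have "y \<in> h ` cbox p q \<longleftrightarrow> g y \<in> cbox p q"
      by (metis gh hg image_iff)
    also have "\<dots> \<longleftrightarrow> y \<in> cbox (h p) (h q)"
      using mem_g[of "g y" "h p" "h q"] by (simp add: gh hg)
    finally show "y \<in> h ` cbox p q \<longleftrightarrow> y \<in> cbox (h p) (h q)" .
  qed
  have cont_g: "continuous (at p) g" for p
    unfolding g_def vector2_eq_scaleR_axis by (intro continuous_intros)
  have content_g: "Henstock_Kurzweil_Integration.content (g ` cbox p q)
      = 1 * Henstock_Kurzweil_Integration.content (cbox p q)" for p q
  proof (cases p; cases q)
    fix p1 p2 q1 q2 assume pq: "p = (p1, p2)" "q = (q1, q2)"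
    have "cbox (vector [p1, p2] :: real^2) (vector [q1, q2]) = {} \<longleftrightarrow> \<not> (p1 \<le> q1 \<and> p2 \<le> q2)"
      using interval_ne_empty_cart(1)[of "vector [p1, p2] :: real^2" "vector [q1, q2]"]
      by (simp add: forall_2) blast
    then have "Henstock_Kurzweil_Integration.content (g ` cbox p q)
        = (if p1 \<le> q1 \<and> p2 \<le> q2 then (q1 - p1) * (q2 - p2) else 0)"
      unfolding g_box pq by (simp add: g_def content_cbox_if_cart UNIV_2)
    also have "\<dots> = Henstock_Kurzweil_Integration.content (cbox p q)"
      unfolding pq content_Pair by (simp add: cbox_interval content_real_if)
    finally show ?thesis
      by simp
  qed
  have "(f has_integral integral (cbox a b) f) (cbox a b)"
    using cont by (intro integrable_integral integrable_continuous)
  then have "((\<lambda>p. f (g p)) has_integral (1 / 1) *\<^sub>R integral (cbox a b) f) (h ` cbox a b)"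
  proof (rule has_integral_twiddle[of 1 h g, rotated -1])
    show "\<exists>w z. g ` cbox p q = cbox w z" for p q
      using g_box by blast
    show "\<exists>w z. h ` cbox p q = cbox w z" for p q
      using h_box by blast
  qed (use hg gh cont_g content_g in auto)
  then have "integral (cbox a b) f = integral (cbox (a$1, a$2) (b$1, b$2)) (\<lambda>p. f (g p))"
    unfolding h_box by (simp add: h_def integral_unique)
  also have "\<dots> = integral (cbox (a$1) (b$1)) (\<lambda>t. integral (cbox (a$2) (b$2)) (\<lambda>u. f (g (t, u))))"
  proof (rule integral_prod_continuous)
    have "g ` cbox (a$1, a$2) (b$1, b$2) \<subseteq> cbox a b"
      by (simp add: g_box gh flip: h_def)
    then show "continuous_on (cbox (a$1, a$2) (b$1, b$2)) (\<lambda>p. f (g p))"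
      using cont_g by (intro continuous_on_compose2[OF cont] continuous_at_imp_continuous_on) auto
  qed
  finally show ?thesis
    by (simp add: cbox_interval g_def)
qed

section \<open>Inverse estimates for polynomials\<close>

lemma poly_eq_lagrange_interpolation:
  fixes P :: "real poly" and t :: "nat \<Rightarrow> real"
  assumes deg: "degree P \<le> n" and inj: "inj_on t {..n}"
  shows "poly P y = (\<Sum>i\<le>n. poly P (t i) * (\<Prod>k\<in>{..n}-{i}. (y - t k) / (t i - t k)))"
proof -
  define L where "L i = smult (1 / (\<Prod>k\<in>{..n}-{i}. (t i - t k))) (\<Prod>k\<in>{..n}-{i}. [:- t k, 1:])" for i
  define Q where "Q = (\<Sum>i\<le>n. smult (poly P (t i)) (L i))"
  have poly_L: "poly (L i) x = (\<Prod>k\<in>{..n}-{i}. (x - t k) / (t i - t k))" for i x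
    by (simp add: L_def poly_prod prod_dividef)
  have "degree (L i) \<le> n" if "i \<le> n" for i
  proof -
    have "degree (\<Prod>k\<in>{..n}-{i}. [:- t k, 1:]) = n"
      using that by (subst degree_prod_sum_eq) auto
    then show ?thesis
      unfolding L_def by (metis degree_smult_le)
  qed
  then have "degree Q \<le> n"
    unfolding Q_def by (intro degree_sum_le) (auto intro: order_trans[OF degree_smult_le])
  have L_node: "poly (L i) (t m) = (if i = m then 1 else 0)" if "i \<le> n" "m \<le> n" for i m
  proof (cases "i = m")
    case True
    have "(\<Prod>k\<in>{..n}-{i}. t i - t k) \<noteq> 0"
      using inj that by (auto simp: inj_on_def)
    with True show ?thesis by (simp add: poly_L prod_dividef)
  next
    case False
    with that have "m \<in> {..n}-{i}" by auto
    with False show ?thesis by (auto simp: poly_L prod_zero_iff)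
  qed
  have "poly Q (t m) = poly P (t m)" if "m \<le> n" for m
    using that by (simp add: Q_def poly_sum L_node if_distrib sum.delta cong: if_cong)
  moreover have "card (t ` {..n}) = Suc n"
    using inj by (simp add: card_image)
  ultimately have "P = Q"
    using deg \<open>degree Q \<le> n\<close> by (intro poly_eqI_degree[of "t ` {..n}"]) auto
  then have "poly P y = poly Q y" by (rule arg_cong)
  also have "\<dots> = (\<Sum>i\<le>n. poly P (t i) * (\<Prod>k\<in>{..n}-{i}. (y - t k) / (t i - t k)))"
    by (simp add: Q_def poly_sum poly_L)
  finally show ?thesis .
qed

lemma abs_poly_le_from_separated_nodes:
  fixes P :: "real poly" and t :: "nat \<Rightarrow> real"
  assumes deg: "degree P \<le> n" and g: "0 < g"
    and sep: "\<And>i k. i \<le> n \<Longrightarrow> k \<le> n \<Longrightarrow> i \<noteq> k \<Longrightarrow> g \<le> \<bar>t i - t k\<bar>"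
    and near: "\<And>k. k \<le> n \<Longrightarrow> \<bar>y - t k\<bar> \<le> R"
    and small: "\<And>i. i \<le> n \<Longrightarrow> \<bar>poly P (t i)\<bar> \<le> m"
  shows "\<bar>poly P y\<bar> \<le> (real n + 1) * m * (R / g) ^ n"
proof -
  have "inj_on t {..n}"
  proof (rule inj_onI)
    fix i k assume "i \<in> {..n}" "k \<in> {..n}" "t i = t k"
    then show "i = k" using sep[of i k] g by auto
  qed
  have term_le: "\<bar>poly P (t i) * (\<Prod>k\<in>{..n}-{i}. (y - t k) / (t i - t k))\<bar> \<le> m * (R / g) ^ n"
    if "i \<in> {..n}" for i
  proof -
    from that have i: "i \<le> n" by simp
    have "\<bar>\<Prod>k\<in>{..n}-{i}. (y - t k) / (t i - t k)\<bar> = (\<Prod>k\<in>{..n}-{i}. \<bar>y - t k\<bar> / \<bar>t i - t k\<bar>)"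
      by (simp add: abs_prod abs_divide)
    also have "\<dots> \<le> (\<Prod>k\<in>{..n}-{i}. R / g)"
    proof (intro prod_mono conjI)
      fix k assume k: "k \<in> {..n}-{i}"
      show "0 \<le> \<bar>y - t k\<bar> / \<bar>t i - t k\<bar>"
        by simp
      show "\<bar>y - t k\<bar> / \<bar>t i - t k\<bar> \<le> R / g"
      proof (rule frac_le)
        show "0 \<le> R" using near[of 0] by (meson abs_ge_zero order_trans zero_le)
        show "\<bar>y - t k\<bar> \<le> R" using k by (simp add: near)
        show "0 < g" by (rule g)
        show "g \<le> \<bar>t i - t k\<bar>" using k i by (simp add: sep)
      qed
    qed
    also have "\<dots> = (R / g) ^ n"
      using i by simp
    finally have "\<bar>\<Prod>k\<in>{..n}-{i}. (y - t k) / (t i - t k)\<bar> \<le> (R / g) ^ n" .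
    then show ?thesis
      unfolding abs_mult
      by (rule mult_mono[OF small[OF i] _ order_trans[OF abs_ge_zero small[OF i]] abs_ge_zero])
  qed
  have "\<bar>poly P y\<bar> \<le> (\<Sum>i\<le>n. m * (R / g) ^ n)"
    unfolding poly_eq_lagrange_interpolation[OF deg \<open>inj_on t {..n}\<close>, of y]
    by (rule order_trans[OF sum_abs sum_mono[OF term_le]])
  then show ?thesis
    by (simp add: algebra_simps)
qed

lemma separated_nodes_with_small_values:
  fixes f :: "real \<Rightarrow> real" and n :: nat
  assumes cont: "continuous_on {\<alpha>..\<alpha>+l} f" and l: "0 < l"
  defines "g \<equiv> l / (2 * real n + 2)"
  obtains t where "\<And>i. i \<le> n \<Longrightarrow> t i \<in> {\<alpha>..\<alpha>+l}"
    and "\<And>i. i \<le> n \<Longrightarrow> g * (f (t i))\<^sup>2 \<le> integral {\<alpha>..\<alpha>+l} (\<lambda>x. (f x)\<^sup>2)"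
    and "\<And>i k. i \<le> n \<Longrightarrow> k \<le> n \<Longrightarrow> i \<noteq> k \<Longrightarrow> g \<le> \<bar>t i - t k\<bar>"
proof -
  \<comment> \<open>n+1 intervals of length g, pairwise at distance at least g; t i minimises |f| on J i.\<close>
  define J where "J i = {\<alpha> + 2 * i * g .. \<alpha> + (2 * i + 1) * g}" for i :: nat
  have g: "0 < g" and l_eq: "l = (2 * real n + 2) * g"
    using l by (simp_all add: g_def)
  have J_sub: "J i \<subseteq> {\<alpha>..\<alpha>+l}" if "i \<le> n" for i
  proof -
    have "(2 * real i + 1) * g \<le> (2 * real n + 2) * g"
      using that g by (intro mult_right_mono) auto
    then show ?thesis
      using g by (auto simp: J_def l_eq)
  qed
  have cont_sq: "continuous_on {\<alpha>..\<alpha>+l} (\<lambda>x. (f x)\<^sup>2)"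
    using cont by (intro continuous_intros)
  have cont_J: "continuous_on (J i) (\<lambda>x. (f x)\<^sup>2)" if "i \<le> n" for i
    using continuous_on_subset[OF cont_sq J_sub[OF that]] .
  have "\<exists>x\<in>J i. \<forall>y\<in>J i. (f x)\<^sup>2 \<le> (f y)\<^sup>2" if "i \<le> n" for i
    using g cont_J[OF that] by (intro continuous_attains_inf) (auto simp: J_def)
  then obtain t where t_J: "\<And>i. i \<le> n \<Longrightarrow> t i \<in> J i"
    and t_min: "\<And>i y. i \<le> n \<Longrightarrow> y \<in> J i \<Longrightarrow> (f (t i))\<^sup>2 \<le> (f y)\<^sup>2"
    by metis
  have small: "g * (f (t i))\<^sup>2 \<le> integral {\<alpha>..\<alpha>+l} (\<lambda>x. (f x)\<^sup>2)" if "i \<le> n" for i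
  proof -
    have int_J: "(\<lambda>x. (f x)\<^sup>2) integrable_on J i"
      using cont_J[OF that] unfolding J_def by (rule integrable_continuous_real)
    have "g * (f (t i))\<^sup>2 = integral (J i) (\<lambda>_. (f (t i))\<^sup>2)"
      using g by (simp add: J_def algebra_simps)
    also have "\<dots> \<le> integral (J i) (\<lambda>x. (f x)\<^sup>2)"
      using t_min[OF that] by (intro integral_le int_J) (auto simp: J_def)
    also have "\<dots> \<le> integral {\<alpha>..\<alpha>+l} (\<lambda>x. (f x)\<^sup>2)"
      using J_sub[OF that] int_J
      by (intro integral_subset_le integrable_continuous_real cont_sq) auto
    finally show ?thesis .
  qed
  have sep: "g \<le> \<bar>t i - t k\<bar>" if "i \<le> n" "k \<le> n" "i \<noteq> k" for i k
  proof -
    have gap: "g \<le> t i - t k" if "k < i" "i \<le> n" for i k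
    proof -
      have "(2 * real k + 2) * g \<le> (2 * real i) * g"
        using that g by (intro mult_right_mono) auto
      then show ?thesis
        using t_J[of i] t_J[of k] that by (auto simp: J_def algebra_simps)
    qed
    show ?thesis
    proof (cases "k < i")
      case True
      then show ?thesis using gap[of k i] that by linarith
    next
      case False
      then have "i < k" using that by simp
      then show ?thesis using gap[of i k] that by linarith
    qed
  qed
  show thesis
  proof (rule that)
    show "t i \<in> {\<alpha>..\<alpha>+l}" if "i \<le> n" for i
      using J_sub[OF that] t_J[OF that] by blast
  qed (fact small, fact sep)
qed

lemma poly_sq_le_integral_interval:
  fixes \<Lambda> :: real and n :: nat
  assumes \<Lambda>: "0 \<le> \<Lambda>"
  obtains C where "0 < C"
    and "\<And>P \<alpha> l y. degree P \<le> n \<Longrightarrow> 0 < l \<Longrightarrow> \<bar>y - \<alpha>\<bar> \<le> \<Lambda> * l \<Longrightarrow>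
           (poly P y)\<^sup>2 \<le> C / l * integral {\<alpha>..\<alpha>+l} (\<lambda>t. (poly P t)\<^sup>2)"
proof -
  define B where "B = ((\<Lambda> + 1) * (2 * real n + 2)) ^ n"
  define C where "C = (2 * real n + 2) * ((real n + 1) * B)\<^sup>2"
  have "0 < C"
    using \<Lambda> by (simp add: C_def B_def)
  moreover have "(poly P y)\<^sup>2 \<le> C / l * integral {\<alpha>..\<alpha>+l} (\<lambda>t. (poly P t)\<^sup>2)"
    if deg: "degree P \<le> n" and l: "0 < l" and y: "\<bar>y - \<alpha>\<bar> \<le> \<Lambda> * l" for P \<alpha> l y
  proof -
    define I where "I = integral {\<alpha>..\<alpha>+l} (\<lambda>t. (poly P t)\<^sup>2)"
    define g where "g = l / (2 * real n + 2)"
    have g: "0 < g"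
      using l by (simp add: g_def)
    have I: "0 \<le> I"
      unfolding I_def by (intro integral_nonneg integrable_continuous_real continuous_intros) auto
    have "continuous_on {\<alpha>..\<alpha>+l} (poly P)"
      by (intro continuous_intros)
    then obtain t where t: "\<And>i. i \<le> n \<Longrightarrow> t i \<in> {\<alpha>..\<alpha>+l}"
      and t_small: "\<And>i. i \<le> n \<Longrightarrow> g * (poly P (t i))\<^sup>2 \<le> I"
      and t_sep: "\<And>i k. i \<le> n \<Longrightarrow> k \<le> n \<Longrightarrow> i \<noteq> k \<Longrightarrow> g \<le> \<bar>t i - t k\<bar>"
      unfolding g_def I_def using separated_nodes_with_small_values[OF _ l, where n=n] by blast
    have t_val: "\<bar>poly P (t i)\<bar> \<le> sqrt (I / g)" if "i \<le> n" for i
      using t_small[OF that] g by (intro real_le_rsqrt) (simp add: field_simps)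
    have t_near: "\<bar>y - t k\<bar> \<le> (\<Lambda> + 1) * l" if "k \<le> n" for k
      using t[OF that] y by (auto simp: algebra_simps abs_le_iff)
    have "\<bar>poly P y\<bar> \<le> (real n + 1) * sqrt (I / g) * ((\<Lambda> + 1) * l / g) ^ n"
      by (rule abs_poly_le_from_separated_nodes[OF deg g t_sep t_near t_val])
    also have "\<dots> = (real n + 1) * B * sqrt (I / g)"
      using l by (simp add: B_def g_def)
    finally have "(poly P y)\<^sup>2 \<le> ((real n + 1) * B * sqrt (I / g))\<^sup>2"
      by (metis abs_ge_zero power2_abs power_mono)
    also have "\<dots> = (real n + 1)\<^sup>2 * B\<^sup>2 * (I / g)"
      using I g by (simp add: power_mult_distrib)
    also have "\<dots> = C / l * I"
      using l by (simp add: C_def g_def power_mult_distrib)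
    finally show ?thesis
      unfolding I_def .
  qed
  ultimately show thesis
    by (rule that)
qed

lemma sum_monomials_eq_poly:
  fixes d :: "nat \<Rightarrow> real"
  obtains P where "degree P \<le> n" and "\<And>x. (\<Sum>k\<le>n. d k * x ^ k) = poly P x"
proof
  show "degree (\<Sum>k\<le>n. monom (d k) k) \<le> n"
    by (intro degree_sum_le) (auto intro: order_trans[OF degree_monom_le])
  show "(\<Sum>k\<le>n. d k * x ^ k) = poly (\<Sum>k\<le>n. monom (d k) k) x" for x
    by (simp add: poly_sum poly_monom)
qed

lemma Pj_horizontal_section:
  assumes "v \<in> Pj j"
  obtains P where "degree P \<le> j" and "\<And>t. v (vector [t, u]) = poly P t"
proof -
  obtain c where c: "\<And>x. v x = (\<Sum>a\<le>j. \<Sum>b\<le>j - a. c a b * (x$1) ^ a * (x$2) ^ b)"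
    using assms unfolding Pj_def by blast
  have "v (vector [t, u]) = (\<Sum>a\<le>j. (\<Sum>b\<le>j - a. c a b * u ^ b) * t ^ a)" for t
    by (simp add: c sum_distrib_left sum_distrib_right mult_ac)
  with sum_monomials_eq_poly[of j "\<lambda>a. \<Sum>b\<le>j - a. c a b * u ^ b"] that show thesis
    by metis
qed

lemma Pj_vertical_section:
  assumes "v \<in> Pj j"
  obtains P where "degree P \<le> j" and "\<And>u. v (vector [t, u]) = poly P u"
proof -
  obtain c where c: "\<And>x. v x = (\<Sum>a\<le>j. \<Sum>b\<le>j - a. c a b * (x$1) ^ a * (x$2) ^ b)"
    using assms unfolding Pj_def by blast
  define d where "d b = (\<Sum>a\<le>j. if b \<le> j - a then c a b * t ^ a else 0)" for b
  have "v (vector [t, u]) = (\<Sum>b\<le>j. d b * u ^ b)" for u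
  proof -
    have "v (vector [t, u]) = (\<Sum>a\<le>j. \<Sum>b\<le>j. if b \<le> j - a then c a b * t ^ a * u ^ b else 0)"
      by (simp add: c sum.If_cases Int_absorb1 atMost_subset_iff flip: atMost_def)
    also have "\<dots> = (\<Sum>b\<le>j. \<Sum>a\<le>j. if b \<le> j - a then c a b * t ^ a * u ^ b else 0)"
      by (rule sum.swap)
    also have "\<dots> = (\<Sum>b\<le>j. d b * u ^ b)"
      by (auto simp: d_def sum_distrib_right intro!: sum.cong)
    finally show ?thesis .
  qed
  with sum_monomials_eq_poly[of j d] that show thesis
    by metis
qed

lemma continuous_on_Pj:
  assumes "v \<in> Pj j"
  shows "continuous_on S v"
proof -
  obtain c where "\<And>x. v x = (\<Sum>a\<le>j. \<Sum>b\<le>j - a. c a b * (x$1) ^ a * (x$2) ^ b)"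
    using assms unfolding Pj_def by blast
  then have "v = (\<lambda>x. \<Sum>a\<le>j. \<Sum>b\<le>j - a. c a b * (x$1) ^ a * (x$2) ^ b)"
    by blast
  then show ?thesis
    by (simp add: continuous_intros)
qed

lemma Pj_sq_le_integral_square:
  fixes \<Lambda> :: real
  assumes \<Lambda>: "0 \<le> \<Lambda>"
  obtains C where "0 < C"
    and "\<And>v \<alpha> l x. v \<in> Pj j \<Longrightarrow> 0 < l \<Longrightarrow> \<bar>x$1 - \<alpha>$1\<bar> \<le> \<Lambda> * l \<Longrightarrow> \<bar>x$2 - \<alpha>$2\<bar> \<le> \<Lambda> * l \<Longrightarrow>
           (v x)\<^sup>2 \<le> C / l\<^sup>2 * integral (cbox \<alpha> (vector [\<alpha>$1 + l, \<alpha>$2 + l])) (\<lambda>z. (v z)\<^sup>2)"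
proof -
  obtain C where C: "0 < C"
    and bound: "\<And>P \<alpha> l y. degree P \<le> j \<Longrightarrow> 0 < l \<Longrightarrow> \<bar>y - \<alpha>\<bar> \<le> \<Lambda> * l \<Longrightarrow>
           (poly P y)\<^sup>2 \<le> C / l * integral {\<alpha>..\<alpha>+l} (\<lambda>t. (poly P t)\<^sup>2)"
    using poly_sq_le_integral_interval[OF \<Lambda>] by metis
  have "(v x)\<^sup>2 \<le> C\<^sup>2 / l\<^sup>2 * integral (cbox \<alpha> (vector [\<alpha>$1 + l, \<alpha>$2 + l])) (\<lambda>z. (v z)\<^sup>2)"
    if v: "v \<in> Pj j" and l: "0 < l" and x1: "\<bar>x$1 - \<alpha>$1\<bar> \<le> \<Lambda> * l" and x2: "\<bar>x$2 - \<alpha>$2\<bar> \<le> \<Lambda> * l"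
    for v \<alpha> l x
  proof -
    define F where "F t u = (v (vector [t, u]))\<^sup>2" for t u
    have cont_F: "continuous_on S (\<lambda>p. F (fst p) (snd p))" for S
      unfolding F_def vector2_eq_scaleR_axis
      by (intro continuous_intros continuous_on_compose2[OF continuous_on_Pj[OF v, of UNIV]]) auto
    have cont_F1: "continuous_on S (\<lambda>t. F t u)" for S u
      unfolding F_def vector2_eq_scaleR_axis
      by (intro continuous_intros continuous_on_compose2[OF continuous_on_Pj[OF v, of UNIV]]) auto
    have "(v x)\<^sup>2 \<le> C / l * integral {\<alpha>$1..\<alpha>$1 + l} (\<lambda>t. F t (x$2))"
    proof -
      obtain P where "degree P \<le> j" and P: "\<And>t. v (vector [t, x$2]) = poly P t"
        using Pj_horizontal_section[OF v] by metis
      have "(v x)\<^sup>2 = (poly P (x$1))\<^sup>2"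
        using P[of "x$1"] by (simp add: vector2_eta)
      also have "\<dots> \<le> C / l * integral {\<alpha>$1..\<alpha>$1 + l} (\<lambda>t. (poly P t)\<^sup>2)"
        using \<open>degree P \<le> j\<close> l x1 by (rule bound)
      finally show ?thesis
        by (simp add: F_def P)
    qed
    also have "\<dots> \<le> C / l * integral {\<alpha>$1..\<alpha>$1 + l} (\<lambda>t. C / l * integral {\<alpha>$2..\<alpha>$2 + l} (\<lambda>u. F t u))"
    proof (intro mult_left_mono integral_le)
      show "F t (x$2) \<le> C / l * integral {\<alpha>$2..\<alpha>$2 + l} (\<lambda>u. F t u)" for t
      proof -
        obtain P where "degree P \<le> j" and P: "\<And>u. v (vector [t, u]) = poly P u"
          using Pj_vertical_section[OF v] by metis
        show ?thesis
          unfolding F_def P using \<open>degree P \<le> j\<close> l x2 by (rule bound)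
      qed
      have inner: "(\<lambda>t. integral {\<alpha>$2..\<alpha>$2 + l} (\<lambda>u. F t u)) integrable_on {\<alpha>$1..\<alpha>$1 + l}"
        using integral_integrable_2dim[OF cont_F, where a="\<alpha>$1" and c="\<alpha>$2" and b="\<alpha>$1 + l" and d="\<alpha>$2 + l"]
        by (simp add: cbox_interval)
      show "(\<lambda>t. C / l * integral {\<alpha>$2..\<alpha>$2 + l} (\<lambda>u. F t u)) integrable_on {\<alpha>$1..\<alpha>$1 + l}"
        using integrable_on_cmult_left[OF inner, of "C / l"] by simp
    qed (use C l cont_F1 in \<open>auto intro: integrable_continuous_real\<close>)
    also have "\<dots> = (C / l)\<^sup>2 * integral {\<alpha>$1..\<alpha>$1 + l} (\<lambda>t. integral {\<alpha>$2..\<alpha>$2 + l} (\<lambda>u. F t u))"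
      by (simp add: power2_eq_square)
    also have "integral {\<alpha>$1..\<alpha>$1 + l} (\<lambda>t. integral {\<alpha>$2..\<alpha>$2 + l} (\<lambda>u. F t u))
        = integral (cbox \<alpha> (vector [\<alpha>$1 + l, \<alpha>$2 + l])) (\<lambda>z. (v z)\<^sup>2)"
      using integral_cbox_vector2_iterated[of \<alpha> "vector [\<alpha>$1 + l, \<alpha>$2 + l]" "\<lambda>z. (v z)\<^sup>2"]
      by (simp add: F_def continuous_intros continuous_on_Pj[OF v])
    finally show ?thesis
      by (simp add: power_divide)
  qed
  with C show thesis
    by (intro that[of "C\<^sup>2"]) auto
qed

lemma Pj_sq_le_integral_ball:
  fixes \<Lambda> :: real
  assumes \<Lambda>: "0 \<le> \<Lambda>"
  obtains C where "0 < C"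
    and "\<And>v c r x S. v \<in> Pj j \<Longrightarrow> 0 < r \<Longrightarrow> ball c r \<subseteq> S \<Longrightarrow> (\<lambda>z. (v z)\<^sup>2) integrable_on S \<Longrightarrow>
           dist x c \<le> \<Lambda> * r \<Longrightarrow> (v x)\<^sup>2 \<le> C / r\<^sup>2 * integral S (\<lambda>z. (v z)\<^sup>2)"
proof -
  obtain C where C: "0 < C"
    and bound: "\<And>v \<alpha> l x. v \<in> Pj j \<Longrightarrow> 0 < l \<Longrightarrow> \<bar>x$1 - \<alpha>$1\<bar> \<le> (2 * \<Lambda> + 1) * l \<Longrightarrow>
           \<bar>x$2 - \<alpha>$2\<bar> \<le> (2 * \<Lambda> + 1) * l \<Longrightarrow>
           (v x)\<^sup>2 \<le> C / l\<^sup>2 * integral (cbox \<alpha> (vector [\<alpha>$1 + l, \<alpha>$2 + l])) (\<lambda>z. (v z)\<^sup>2)"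
    using Pj_sq_le_integral_square[of "2 * \<Lambda> + 1"] \<Lambda> by auto
  have "(v x)\<^sup>2 \<le> 4 * C / r\<^sup>2 * integral S (\<lambda>z. (v z)\<^sup>2)"
    if v: "v \<in> Pj j" and r: "0 < r" and S: "ball c r \<subseteq> S" and int_S: "(\<lambda>z. (v z)\<^sup>2) integrable_on S"
      and x: "dist x c \<le> \<Lambda> * r" for v c r x S
  proof -
    define \<alpha> :: "real^2" where "\<alpha> = vector [c$1 - r/4, c$2 - r/4]"
    define Q where "Q = cbox \<alpha> (vector [\<alpha>$1 + r/2, \<alpha>$2 + r/2])"
    have "Q \<subseteq> ball c r"
    proof
      fix z assume "z \<in> Q"
      then have coord: "\<bar>(c - z)$i\<bar> \<le> r/4" for i
        using exhaust_2[of i] by (auto simp: Q_def \<alpha>_def mem_box_cart forall_2 abs_if)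
      have "norm (c - z) \<le> r/4 + r/4"
        using norm_le_l1_cart[of "c - z"] coord[of 1] coord[of 2] by (simp add: sum_2)
      then show "z \<in> ball c r"
        using r by (simp add: dist_norm)
    qed
    have "\<bar>x$i - \<alpha>$i\<bar> \<le> (2 * \<Lambda> + 1) * (r/2)" for i
    proof -
      have "\<bar>x$i - c$i\<bar> \<le> \<Lambda> * r"
        using component_le_norm_cart[of "x - c" i] x by (simp add: dist_norm)
      moreover have "\<alpha>$i = c$i - r/4"
        using exhaust_2[of i] by (auto simp: \<alpha>_def)
      ultimately show ?thesis
        using r by (simp add: algebra_simps abs_le_iff)
    qed
    then have "(v x)\<^sup>2 \<le> C / (r/2)\<^sup>2 * integral Q (\<lambda>z. (v z)\<^sup>2)"
      unfolding Q_def using v r by (intro bound) auto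
    also have "\<dots> \<le> C / (r/2)\<^sup>2 * integral S (\<lambda>z. (v z)\<^sup>2)"
    proof -
      have "(\<lambda>z. (v z)\<^sup>2) integrable_on Q"
        unfolding Q_def by (intro integrable_continuous continuous_intros continuous_on_Pj[OF v])
      then show ?thesis
        using \<open>Q \<subseteq> ball c r\<close> S C int_S by (intro mult_left_mono integral_subset_le) auto
    qed
    finally show ?thesis
      by (simp add: power_divide mult.commute)
  qed
  with C show thesis
    by (intro that[of "4 * C"]) auto
qed

section \<open>Strips over the boundary edges\<close>

definition edge_strip :: "pt \<Rightarrow> pt \<Rightarrow> pt \<Rightarrow> real \<Rightarrow> pt set" where
  "edge_strip a b \<nu> \<delta> = {a + t *\<^sub>R ((1 / dist a b) *\<^sub>R (b - a)) + u *\<^sub>R \<nu> | t u. t \<in> {0..dist a b} \<and> \<bar>u\<bar> \<le> \<delta>}"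

lemma linear_coordinate_combination: "linear (\<lambda>p :: real^2. p$1 *\<^sub>R u + p$2 *\<^sub>R w)"
  by (auto simp: linear_iff algebra_simps)

lemma edge_strip_eq_linear_image:
  "edge_strip a b \<nu> \<delta> = (+) a ` (\<lambda>p :: real^2. p$1 *\<^sub>R ((1 / dist a b) *\<^sub>R (b - a)) + p$2 *\<^sub>R \<nu>) `
      cbox (vector [0, -\<delta>]) (vector [dist a b, \<delta>])"
  (is "_ = (+) a ` ?L ` ?Q")
proof (intro equalityI subsetI)
  have mem_Q: "p \<in> ?Q \<longleftrightarrow> p$1 \<in> {0..dist a b} \<and> \<bar>p$2\<bar> \<le> \<delta>" for p :: "real^2"
    by (auto simp: mem_box_cart forall_2)
  fix x
  show "x \<in> (+) a ` ?L ` ?Q" if strip: "x \<in> edge_strip a b \<nu> \<delta>"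
  proof -
    obtain t u where x: "x = a + t *\<^sub>R ((1 / dist a b) *\<^sub>R (b - a)) + u *\<^sub>R \<nu>"
      and "t \<in> {0..dist a b}" "\<bar>u\<bar> \<le> \<delta>"
      using strip unfolding edge_strip_def by blast
    then have "vector [t, u] \<in> ?Q"
      by (simp add: mem_Q)
    moreover have "x = a + ?L (vector [t, u])"
      by (simp add: x add.assoc)
    ultimately show ?thesis
      by blast
  qed
  show "x \<in> edge_strip a b \<nu> \<delta>" if image: "x \<in> (+) a ` ?L ` ?Q"
  proof -
    obtain p where "p \<in> ?Q" and "x = a + p$1 *\<^sub>R ((1 / dist a b) *\<^sub>R (b - a)) + p$2 *\<^sub>R \<nu>"
      using image by (auto simp: add.assoc)
    then show ?thesis
      unfolding edge_strip_def mem_Q by blast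
  qed
qed

lemma compact_edge_strip: "compact (edge_strip a b \<nu> \<delta>)"
  unfolding edge_strip_eq_linear_image
  using linear_conv_bounded_linear[THEN iffD1, OF linear_coordinate_combination]
  by (intro compact_translation compact_continuous_image linear_continuous_on compact_cbox)

lemma convex_edge_strip: "convex (edge_strip a b \<nu> \<delta>)"
  unfolding edge_strip_eq_linear_image
  by (intro convex_translation convex_linear_image[OF linear_coordinate_combination] convex_box)

lemma closed_segment_subset_edge_strip:
  assumes "0 \<le> \<delta>"
  shows "closed_segment a b \<subseteq> edge_strip a b \<nu> \<delta>"
proof
  fix x assume "x \<in> closed_segment a b"
  then obtain s where s: "0 \<le> s" "s \<le> 1" "x = a + s *\<^sub>R (b - a)"
    unfolding closed_segment_def by (auto simp: algebra_simps)
  have "x = a + (s * dist a b) *\<^sub>R ((1 / dist a b) *\<^sub>R (b - a)) + 0 *\<^sub>R \<nu>"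
    using s by (cases "a = b") auto
  moreover have "s * dist a b \<in> {0..dist a b}"
    using s by (simp add: mult_left_le_one_le)
  moreover have "\<bar>0 :: real\<bar> \<le> \<delta>"
    using assms by simp
  ultimately show "x \<in> edge_strip a b \<nu> \<delta>"
    unfolding edge_strip_def by blast
qed

lemma dist_le_edge_strip:
  assumes "x \<in> edge_strip a b \<nu> \<delta>" and "norm \<nu> = 1"
  shows "dist x a \<le> dist a b + \<delta>"
proof -
  define \<tau> where "\<tau> = (1 / dist a b) *\<^sub>R (b - a)"
  obtain t u where x: "x = a + t *\<^sub>R \<tau> + u *\<^sub>R \<nu>" and t: "t \<in> {0..dist a b}" and u: "\<bar>u\<bar> \<le> \<delta>"
    using assms(1) unfolding edge_strip_def \<tau>_def by blast
  have "norm \<tau> \<le> 1"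
    by (cases "a = b") (simp_all add: \<tau>_def dist_norm norm_minus_commute)
  have "dist x a = norm (t *\<^sub>R \<tau> + u *\<^sub>R \<nu>)"
    by (simp add: x dist_norm)
  also have "\<dots> \<le> \<bar>t\<bar> * norm \<tau> + \<bar>u\<bar> * norm \<nu>"
    by (metis norm_scaleR norm_triangle_ineq)
  also have "\<dots> \<le> dist a b * 1 + \<delta> * 1"
    using t u \<open>norm \<tau> \<le> 1\<close> assms(2) by (intro add_mono mult_mono) auto
  finally show ?thesis
    by simp
qed

lemma measure_edge_strip_le:
  assumes "norm \<nu> = 1" and "0 \<le> \<delta>"
  shows "measure lebesgue (edge_strip a b \<nu> \<delta>) \<le> 2 * \<delta> * dist a b"
proof -
  define \<tau> where "\<tau> = (1 / dist a b) *\<^sub>R (b - a)"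
  define L where "L p = p$1 *\<^sub>R \<tau> + p$2 *\<^sub>R \<nu>" for p :: "real^2"
  define Q :: "(real^2) set" where "Q = cbox (vector [0, -\<delta>]) (vector [dist a b, \<delta>])"
  have "linear L"
    unfolding L_def by (rule linear_coordinate_combination)
  have "Q \<in> lmeasurable"
    by (simp add: Q_def)
  have "measure lebesgue Q = Henstock_Kurzweil_Integration.content Q"
    using lmeasure_integral[OF \<open>Q \<in> lmeasurable\<close>] by (simp add: Q_def)
  also have "\<dots> = 2 * \<delta> * dist a b"
    using assms(2) by (simp add: Q_def content_cbox_cart interval_ne_empty_cart forall_2 UNIV_2)
  finally have "measure lebesgue Q = 2 * \<delta> * dist a b" .
  \<comment> \<open>Hadamard's inequality for the 2x2 matrix with columns tau and nu.\<close>
  have "\<bar>det (matrix L)\<bar> \<le> 1"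
  proof -
    have "norm \<tau> \<le> 1"
      by (cases "a = b") (simp_all add: \<tau>_def dist_norm norm_minus_commute)
    then have "(\<tau>$1)\<^sup>2 + (\<tau>$2)\<^sup>2 \<le> 1" and "(\<nu>$1)\<^sup>2 + (\<nu>$2)\<^sup>2 = 1"
      using assms(1) by (simp_all add: norm_vec_def L2_set_def sum_2)
    have "(\<tau>$1 * \<nu>$2 - \<tau>$2 * \<nu>$1)\<^sup>2 \<le> (\<tau>$1 * \<nu>$2 - \<tau>$2 * \<nu>$1)\<^sup>2 + (\<tau>$1 * \<nu>$1 + \<tau>$2 * \<nu>$2)\<^sup>2"
      by simp
    also have "\<dots> = ((\<tau>$1)\<^sup>2 + (\<tau>$2)\<^sup>2) * ((\<nu>$1)\<^sup>2 + (\<nu>$2)\<^sup>2)"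
      by (simp add: power2_eq_square algebra_simps)
    also have "\<dots> \<le> 1"
      using \<open>(\<tau>$1)\<^sup>2 + (\<tau>$2)\<^sup>2 \<le> 1\<close> \<open>(\<nu>$1)\<^sup>2 + (\<nu>$2)\<^sup>2 = 1\<close> by simp
    finally have "(\<tau>$1 * \<nu>$2 - \<tau>$2 * \<nu>$1)\<^sup>2 \<le> 1" .
    moreover have "det (matrix L) = \<tau>$1 * \<nu>$2 - \<tau>$2 * \<nu>$1"
      by (simp add: det_2 matrix_def L_def axis_def)
    ultimately show ?thesis
      by (simp add: abs_square_le_1)
  qed
  have "measure lebesgue (edge_strip a b \<nu> \<delta>) = measure lebesgue (L ` Q)"
    unfolding edge_strip_eq_linear_image Q_def L_def \<tau>_def by (rule measure_translation)
  also have "\<dots> = \<bar>det (matrix L)\<bar> * measure lebesgue Q"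
    by (rule measure_linear_image[OF \<open>linear L\<close> \<open>Q \<in> lmeasurable\<close>])
  also have "\<dots> \<le> 2 * \<delta> * dist a b"
    using \<open>\<bar>det (matrix L)\<bar> \<le> 1\<close> \<open>measure lebesgue Q = 2 * \<delta> * dist a b\<close> assms(2)
    by (simp add: mult_left_le_one_le)
  finally show ?thesis .
qed

lemma bounded_region_subset_edge_strip:
  assumes "A \<subseteq> edge_strip a b \<nu> \<delta>" and "0 \<le> \<delta>"
  shows "bounded_region (closed_segment a b) A \<subseteq> edge_strip a b \<nu> \<delta>"
proof -
  have "closed_segment a b \<union> A \<subseteq> edge_strip a b \<nu> \<delta>"
    using assms closed_segment_subset_edge_strip by blast
  then have "inside (closed_segment a b \<union> A) \<subseteq> edge_strip a b \<nu> \<delta>"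
    using inside_mono[of "closed_segment a b \<union> A" "edge_strip a b \<nu> \<delta>"]
    by (auto simp: inside_convex[OF convex_edge_strip])
  with \<open>closed_segment a b \<union> A \<subseteq> _\<close> show ?thesis
    unfolding bounded_region_def by blast
qed

definition regions_in_edge_strips :: "real \<Rightarrow> pt set \<Rightarrow> pt set set \<Rightarrow> (pt set \<Rightarrow> pt set) \<Rightarrow> bool" where
  "regions_in_edge_strips \<delta> K B A \<longleftrightarrow>
     (\<forall>e\<in>B. \<exists>a b \<nu>. e = closed_segment a b \<and> e \<subseteq> K \<and> norm \<nu> = 1 \<and> A e \<subseteq> edge_strip a b \<nu> \<delta>)"

lemma L2sq_bounded_region_le:
  assumes v: "v \<in> Pj j" and K: "bounded K" "c \<in> K" "closed_segment a b \<subseteq> K"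
    and \<nu>: "norm \<nu> = 1" and \<delta>: "0 \<le> \<delta>" "\<delta> \<le> E * diameter K" and A: "A \<subseteq> edge_strip a b \<nu> \<delta>"
    and bound: "\<And>x. dist x c \<le> (2 + E) * diameter K \<Longrightarrow> (v x)\<^sup>2 \<le> S"
  shows "L2sq v (bounded_region (closed_segment a b) A) \<le> S * (2 * \<delta> * diameter K)"
proof -
  have "a \<in> K" "b \<in> K"
    using K(3) by auto
  then have "dist a b \<le> diameter K" "dist a c \<le> diameter K"
    using K(1,2) by (simp_all add: diameter_bounded_bound)
  have strip_bound: "(v x)\<^sup>2 \<le> S" if "x \<in> edge_strip a b \<nu> \<delta>" for x
  proof (rule bound)
    have "dist x c \<le> dist x a + dist a c"
      by (rule dist_triangle)
    also have "\<dots> \<le> (diameter K + E * diameter K) + diameter K"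
      using dist_le_edge_strip[OF that \<nu>] \<open>dist a b \<le> diameter K\<close> \<open>dist a c \<le> diameter K\<close> \<delta>(2) by simp
    finally show "dist x c \<le> (2 + E) * diameter K"
      by (simp add: algebra_simps)
  qed
  have "a \<in> edge_strip a b \<nu> \<delta>"
    using closed_segment_subset_edge_strip[OF \<delta>(1)] by auto
  then have "0 \<le> S"
    using strip_bound by (meson order_trans zero_le_power2)
  have "L2sq v (bounded_region (closed_segment a b) A) \<le> S * measure lebesgue (edge_strip a b \<nu> \<delta>)"
    unfolding L2sq_def using strip_bound bounded_region_subset_edge_strip[OF A \<delta>(1)]
    by (intro integral_le_bound_mult_measure compact_edge_strip continuous_intros continuous_on_Pj[OF v]) auto
  also have "\<dots> \<le> S * (2 * \<delta> * dist a b)"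
    using measure_edge_strip_le[OF \<nu> \<delta>(1)] \<open>0 \<le> S\<close> by (rule mult_left_mono)
  also have "\<dots> \<le> S * (2 * \<delta> * diameter K)"
    using \<open>dist a b \<le> diameter K\<close> \<delta>(1) \<open>0 \<le> S\<close> by (intro mult_left_mono) auto
  finally show ?thesis .
qed

lemma sum_L2sq_bounded_regions_le:
  fixes C1 E :: real and M j :: nat
  assumes C1: "0 < C1" and E: "0 \<le> E"
  obtains C where "0 \<le> C"
    and "\<And>K c r B A v \<delta>. compact K \<Longrightarrow> 0 < r \<Longrightarrow> ball c r \<subseteq> K \<Longrightarrow> C1 * diameter K \<le> r \<Longrightarrow>
           card B \<le> M \<Longrightarrow> 0 \<le> \<delta> \<Longrightarrow> \<delta> \<le> E * diameter K \<Longrightarrow> regions_in_edge_strips \<delta> K B A \<Longrightarrow>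
           v \<in> Pj j \<Longrightarrow> (\<Sum>e\<in>B. L2sq v (bounded_region e (A e))) \<le> C * \<delta> / diameter K * L2sq v K"
proof -
  obtain Cb where Cb: "0 < Cb"
    and pointwise: "\<And>v c r x S. v \<in> Pj j \<Longrightarrow> 0 < r \<Longrightarrow> ball c r \<subseteq> S \<Longrightarrow> (\<lambda>z. (v z)\<^sup>2) integrable_on S \<Longrightarrow>
           dist x c \<le> (2 + E) / C1 * r \<Longrightarrow> (v x)\<^sup>2 \<le> Cb / r\<^sup>2 * integral S (\<lambda>z. (v z)\<^sup>2)"
    using Pj_sq_le_integral_ball[of "(2 + E) / C1" j] C1 E by auto
  define C where "C = 2 * M * Cb / C1\<^sup>2"
  have "0 \<le> C"
    using Cb by (simp add: C_def)
  moreover have "(\<Sum>e\<in>B. L2sq v (bounded_region e (A e))) \<le> C * \<delta> / diameter K * L2sq v K"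
    if K: "compact K" and r: "0 < r" "ball c r \<subseteq> K" "C1 * diameter K \<le> r"
      and B: "card B \<le> M" and \<delta>: "0 \<le> \<delta>" "\<delta> \<le> E * diameter K"
      and strips: "regions_in_edge_strips \<delta> K B A" and v: "v \<in> Pj j" for K c r B A v \<delta>
  proof -
    define hK where "hK = diameter K"
    define S where "S = Cb / (C1 * hK)\<^sup>2 * L2sq v K"
    have "bounded K" "c \<in> K"
      using K r by (auto simp: compact_imp_bounded)
    have "0 < hK"
      using diameter_subset[OF r(2) \<open>bounded K\<close>] r(1) by (simp add: hK_def)
    have near_bound: "(v x)\<^sup>2 \<le> S" if "dist x c \<le> (2 + E) * hK" for x
    proof -
      have "hK \<le> r / C1"
        using r(3) C1 by (simp add: hK_def field_simps mult.commute)
      then have "(2 + E) * hK \<le> (2 + E) * (r / C1)"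
        using E by (intro mult_left_mono) auto
      then have "(v x)\<^sup>2 \<le> Cb / r\<^sup>2 * integral K (\<lambda>z. (v z)\<^sup>2)"
        using that by (intro pointwise[OF v r(1,2)] integrable_continuous_compact K continuous_intros
            continuous_on_Pj[OF v]) auto
      also have "\<dots> \<le> S"
        unfolding S_def L2sq_def using r C1 \<open>0 < hK\<close> Cb L2sq_nonneg[of v K, unfolded L2sq_def]
        by (intro mult_right_mono divide_left_mono power_mono) (auto simp: hK_def)
      finally show ?thesis .
    qed
    have "L2sq v (bounded_region e (A e)) \<le> S * (2 * \<delta> * hK)" if "e \<in> B" for e
    proof -
      have "\<exists>a b \<nu>. e = closed_segment a b \<and> e \<subseteq> K \<and> norm \<nu> = 1 \<and> A e \<subseteq> edge_strip a b \<nu> \<delta>"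
        using strips \<open>e \<in> B\<close> unfolding regions_in_edge_strips_def by (rule bspec)
      then obtain a b \<nu> where e: "e = closed_segment a b" "e \<subseteq> K" and \<nu>: "norm \<nu> = 1"
        and A: "A e \<subseteq> edge_strip a b \<nu> \<delta>"
        by blast
      show ?thesis
        unfolding e(1) hK_def
        by (rule L2sq_bounded_region_le[OF v \<open>bounded K\<close> \<open>c \<in> K\<close> e(2)[unfolded e(1)] \<nu> \<delta> A[unfolded e(1)]])
           (use near_bound in \<open>simp add: hK_def\<close>)
    qed
    then have "(\<Sum>e\<in>B. L2sq v (bounded_region e (A e))) \<le> card B * (S * (2 * \<delta> * hK))"
      by (rule sum_bounded_above)
    also have "\<dots> \<le> M * (S * (2 * \<delta> * hK))"
      using B \<delta>(1) \<open>0 < hK\<close> Cb L2sq_nonneg[of v K] by (intro mult_right_mono) (auto simp: S_def)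
    also have "\<dots> = C * \<delta> / diameter K * L2sq v K"
      using C1 \<open>0 < hK\<close> by (simp add: S_def C_def hK_def power2_eq_square field_simps)
    finally show ?thesis .
  qed
  ultimately show thesis
    by (rule that)
qed

section \<open>Consequences of the mesh assumptions\<close>

lemma compact_Un_inside:
  fixes S :: "'a::euclidean_space set"
  assumes "compact S"
  shows "compact (S \<union> inside S)"
proof -
  have "closed (S \<union> inside S)"
    unfolding union_with_inside using open_outside[OF compact_imp_closed[OF assms]] by (simp add: closed_def)
  moreover have "bounded (S \<union> inside S)"
    using compact_imp_bounded[OF assms] by (simp add: bounded_inside)
  ultimately show ?thesis
    by (simp add: compact_eq_bounded_closed bounded_Un)
qed

lemma compact_polyreg: "compact (polyreg vs)"
  unfolding polyreg_def pboundary_def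
  by (intro compact_Un_inside compact_Union) (auto simp: edges_def edge_def)

lemma edge_subset_polyreg: "i < length vs \<Longrightarrow> edge vs i \<subseteq> polyreg vs"
  unfolding polyreg_def pboundary_def edges_def by auto

lemma admissible_mesh_polyreg:
  assumes "admissible_mesh C1 C2 C3 C4 C4' C5 C6 M H0 \<Omega> T VL cB rB arcOf" and "K \<in> T"
  shows "K = polyreg (VL K)"
proof -
  have "\<forall>K\<in>T. simple_polygon (VL K) \<and> K = polyreg (VL K)"
    using assms(1) unfolding admissible_mesh_def by (elim conjE) assumption
  then show ?thesis
    using assms(2) by blast
qed

lemma admissible_mesh_element:
  assumes adm: "admissible_mesh C1 C2 C3 C4 C4' C5 C6 M H0 \<Omega> T VL cB rB arcOf" and K: "K \<in> T"
  shows "compact K" and "0 < rB K" and "ball (cB K) (rB K) \<subseteq> K" and "C1 * diameter K \<le> rB K"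
    and "0 < diameter K" and "diameter K \<le> mesh_h T" and "mesh_h T \<le> C3 * diameter K"
proof -
  show "compact K"
    using admissible_mesh_polyreg[OF adm K] compact_polyreg by metis
  have "\<forall>K\<in>T. 0 < rB K \<and> rB K \<ge> C1 * diameter K \<and> ball (cB K) (rB K) \<subseteq> K \<and>
      (\<forall>x\<in>K. \<forall>y\<in>ball (cB K) (rB K). closed_segment x y \<subseteq> K)"
    using adm unfolding admissible_mesh_def by (elim conjE) assumption
  then show r: "0 < rB K" "ball (cB K) (rB K) \<subseteq> K" "C1 * diameter K \<le> rB K"
    using K by blast+
  show "0 < diameter K"
    using diameter_subset[OF r(2) compact_imp_bounded[OF \<open>compact K\<close>]] r(1) by simp
  have "finite T"
    using adm unfolding admissible_mesh_def by (elim conjE) assumption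
  then show "diameter K \<le> mesh_h T"
    unfolding mesh_h_def using K by (intro Max_ge) auto
  have "\<forall>K\<in>T. mesh_h T \<le> C3 * diameter K"
    using adm unfolding admissible_mesh_def by (elim conjE) assumption
  then show "mesh_h T \<le> C3 * diameter K"
    using K by blast
qed

lemma admissible_mesh_card_bedges:
  assumes adm: "admissible_mesh C1 C2 C3 C4 C4' C5 C6 M H0 \<Omega> T VL cB rB arcOf" and K: "K \<in> T"
  shows "card (bedges_of T (VL K)) \<le> M"
proof -
  \<comment> \<open>The triangle P(e) of every boundary edge e contains its apex, the centre of the ball.\<close>
  define I where "I = {i. i < length (VL K) \<and> edge (VL K) i \<subseteq> frontier (\<Union>T) \<and>
      cB K \<in> convex hull {vtx (VL K) i, vtx (VL K) (Suc i), cB K}}"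
  have "bedges_of T (VL K) \<subseteq> edge (VL K) ` I"
    unfolding bedges_of_def edges_def I_def by (auto intro: hull_inc)
  then have "card (bedges_of T (VL K)) \<le> card (edge (VL K) ` I)"
    by (rule card_mono[rotated]) (simp add: I_def)
  also have "\<dots> \<le> card I"
    by (rule card_image_le) (simp add: I_def)
  also have "\<dots> \<le> M"
  proof -
    have "\<forall>K\<in>T. \<forall>x\<in>K. card {i. i < length (VL K) \<and> edge (VL K) i \<subseteq> frontier (\<Union>T) \<and>
        x \<in> convex hull {vtx (VL K) i, vtx (VL K) (Suc i), cB K}} \<le> M"
      using adm unfolding admissible_mesh_def by (elim conjE) assumption
    moreover have "cB K \<in> K"
      using admissible_mesh_element(2,3)[OF adm K] by auto
    ultimately show ?thesis
      unfolding I_def using K by blast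
  qed
  finally show ?thesis .
qed

lemma admissible_mesh_regions_in_edge_strips:
  assumes adm: "admissible_mesh C1 C2 C3 C4 C4' C5 C6 M H0 \<Omega> T VL cB rB arcOf" and K: "K \<in> T"
  shows "regions_in_edge_strips (C4 * (mesh_s T VL)\<^sup>2) K (bedges_of T (VL K)) arcOf"
  unfolding regions_in_edge_strips_def
proof
  fix e assume "e \<in> bedges_of T (VL K)"
  then obtain i where i: "i < length (VL K)" and e: "e = edge (VL K) i" and "e \<subseteq> frontier (\<Union>T)"
    unfolding bedges_of_def edges_def by blast
  define a where "a = vtx (VL K) i"
  define b where "b = vtx (VL K) (Suc i)"
  have "\<forall>K\<in>T. \<forall>i<length (VL K). edge (VL K) i \<subseteq> frontier (\<Union>T) \<longrightarrow>
       (let a = vtx (VL K) i; b = vtx (VL K) (Suc i); he = dist a b;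
            \<tau> = (1 / he) *\<^sub>R (b - a) in
        \<exists>\<nu> \<gamma> n. norm \<nu> = 1 \<and> \<nu> \<bullet> \<tau> = 0 \<and> outward_edge_normal K a b n \<and>
          bij_betw (\<lambda>t. a + t *\<^sub>R \<tau> + \<gamma> t *\<^sub>R \<nu>) {0..he} (arcOf (edge (VL K) i)) \<and>
          (\<forall>t\<in>{0..he}. \<bar>\<gamma> t\<bar> \<le> C4 * (mesh_s T VL)\<^sup>2) \<and>
          (\<forall>t\<in>{0..he}. \<exists>nn. outward_normal \<Omega> (a + t *\<^sub>R \<tau> + \<gamma> t *\<^sub>R \<nu>) nn \<and>
                              norm (n - nn) \<le> C4' * mesh_s T VL))"
    using adm unfolding admissible_mesh_def by (elim conjE) assumption
  then obtain \<nu> \<gamma> where \<nu>: "norm \<nu> = 1"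
    and arc: "bij_betw (\<lambda>t. a + t *\<^sub>R ((1 / dist a b) *\<^sub>R (b - a)) + \<gamma> t *\<^sub>R \<nu>) {0..dist a b} (arcOf e)"
    and \<gamma>: "\<forall>t\<in>{0..dist a b}. \<bar>\<gamma> t\<bar> \<le> C4 * (mesh_s T VL)\<^sup>2"
    using K i \<open>e \<subseteq> frontier (\<Union>T)\<close> unfolding Let_def a_def b_def e by blast
  have "arcOf e \<subseteq> edge_strip a b \<nu> (C4 * (mesh_s T VL)\<^sup>2)"
    using bij_betw_imp_surj_on[OF arc] \<gamma> unfolding edge_strip_def by blast
  moreover have "e \<subseteq> K"
    using edge_subset_polyreg[OF i] admissible_mesh_polyreg[OF adm K] e by simp
  moreover have "e = closed_segment a b"
    by (simp add: e edge_def a_def b_def)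
  ultimately show "\<exists>a b \<nu>. e = closed_segment a b \<and> e \<subseteq> K \<and> norm \<nu> = 1 \<and>
      arcOf e \<subseteq> edge_strip a b \<nu> (C4 * (mesh_s T VL)\<^sup>2)"
    using \<nu> by blast
qed

lemma admissible_mesh_s_le_diameter:
  assumes adm: "admissible_mesh C1 C2 C3 C4 C4' C5 C6 M H0 \<Omega> T VL cB rB arcOf"
    and K: "K \<in> mesh_TB T VL"
  shows "0 \<le> mesh_s T VL" and "mesh_s T VL \<le> \<bar>C5\<bar> * diameter K"
proof -
  have "K \<in> T" and "bedges_of T (VL K) \<noteq> {}"
    using K by (auto simp: mesh_TB_def)
  then obtain e where e: "e \<in> bedges_of T (VL K)"
    by blast
  have "finite T"
    using adm unfolding admissible_mesh_def by (elim conjE) assumption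
  then have "finite (mesh_EB T VL)"
    by (simp add: mesh_EB_def bedges_of_def edges_def)
  have "e \<in> mesh_EB T VL"
    using e \<open>K \<in> T\<close> by (auto simp: mesh_EB_def)
  have "\<exists>a b \<nu>. e = closed_segment a b \<and> e \<subseteq> K \<and> norm \<nu> = 1 \<and>
      arcOf e \<subseteq> edge_strip a b \<nu> (C4 * (mesh_s T VL)\<^sup>2)"
    using admissible_mesh_regions_in_edge_strips[OF adm \<open>K \<in> T\<close>] e
    unfolding regions_in_edge_strips_def by (rule bspec)
  then have "e \<subseteq> K" and "bounded e"
    by (auto simp: compact_imp_bounded)
  then have diam_e: "0 \<le> diameter e" "diameter e \<le> diameter K"
    using compact_imp_bounded[OF admissible_mesh_element(1)[OF adm \<open>K \<in> T\<close>]]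
    by (auto intro: diameter_ge_0 diameter_subset)
  show "0 \<le> mesh_s T VL"
    unfolding mesh_s_def using \<open>finite (mesh_EB T VL)\<close> \<open>e \<in> mesh_EB T VL\<close> diam_e(1)
    by (meson Max_ge finite_imageI imageI order_trans)
  have "\<forall>e\<in>mesh_EB T VL. mesh_s T VL \<le> C5 * diameter e"
    using adm unfolding admissible_mesh_def by (elim conjE) assumption
  then have "mesh_s T VL \<le> C5 * diameter e"
    using \<open>e \<in> mesh_EB T VL\<close> by blast
  also have "\<dots> \<le> \<bar>C5\<bar> * diameter K"
    using diam_e by (intro mult_mono) auto
  finally show "mesh_s T VL \<le> \<bar>C5\<bar> * diameter K" .
qed

lemma admissible_mesh_layer_width:
  assumes adm: "admissible_mesh C1 C2 C3 C4 C4' C5 C6 M H0 \<Omega> T VL cB rB arcOf"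
    and K: "K \<in> mesh_TB T VL"
  shows "(mesh_s T VL)\<^sup>2 \<le> C5\<^sup>2 * H0 * diameter K"
proof -
  have "K \<in> T"
    using K by (simp add: mesh_TB_def)
  note elem = admissible_mesh_element[OF adm this]
  have "mesh_h T \<le> H0"
    using adm unfolding admissible_mesh_def by (elim conjE) assumption
  have "(mesh_s T VL)\<^sup>2 \<le> (\<bar>C5\<bar> * diameter K)\<^sup>2"
    using admissible_mesh_s_le_diameter[OF adm K] by (intro power_mono)
  also have "\<dots> = C5\<^sup>2 * (diameter K * diameter K)"
    by (simp add: power_mult_distrib power2_eq_square)
  also have "\<dots> \<le> C5\<^sup>2 * (H0 * diameter K)"
    using elem(5,6) \<open>mesh_h T \<le> H0\<close> by (intro mult_left_mono mult_right_mono) auto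
  finally show ?thesis
    by (simp add: mult.assoc)
qed

theorem lemma2p6:
  fixes j :: nat and C1 C2 C3 C4 C4' C5 C6 H0 :: real and M :: nat
  assumes "0 < C1" "0 < C2" "0 < C3" "0 < C4" "0 < C4'" "0 < C5" "0 < C6" "0 < H0"
  shows "\<exists>C. \<forall>\<Omega> T VL cB rB arcOf K v.
           admissible_mesh C1 C2 C3 C4 C4' C5 C6 M H0 \<Omega> T VL cB rB arcOf \<longrightarrow>
           K \<in> mesh_TB T VL \<longrightarrow> v \<in> Pj j \<longrightarrow>
           (\<Sum>e\<in>bedges_of T (VL K). L2sq v (bounded_region e (arcOf e)))
             \<le> C * (mesh_s T VL)\<^sup>2 / mesh_h T * L2sq v K"
proof -
  define E where "E = C4 * C5\<^sup>2 * H0"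
  have "0 \<le> E"
    using assms by (simp add: E_def)
  obtain C where C: "0 \<le> C"
    and bound: "\<And>K c r B A v \<delta>. compact K \<Longrightarrow> 0 < r \<Longrightarrow> ball c r \<subseteq> K \<Longrightarrow> C1 * diameter K \<le> r \<Longrightarrow>
           card B \<le> M \<Longrightarrow> 0 \<le> \<delta> \<Longrightarrow> \<delta> \<le> E * diameter K \<Longrightarrow> regions_in_edge_strips \<delta> K B A \<Longrightarrow>
           v \<in> Pj j \<Longrightarrow> (\<Sum>e\<in>B. L2sq v (bounded_region e (A e))) \<le> C * \<delta> / diameter K * L2sq v K"
    using sum_L2sq_bounded_regions_le[OF \<open>0 < C1\<close> \<open>0 \<le> E\<close>, where M=M and j=j] by blast
  show ?thesis
  proof (intro exI[of _ "C * C4 * C3"] allI impI)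
    fix \<Omega> T VL cB rB arcOf K v
    assume adm: "admissible_mesh C1 C2 C3 C4 C4' C5 C6 M H0 \<Omega> T VL cB rB arcOf"
      and TB: "K \<in> mesh_TB T VL" and v: "v \<in> Pj j"
    then have K: "K \<in> T"
      by (simp add: mesh_TB_def)
    note elem = admissible_mesh_element[OF adm K]
    have "C4 * (mesh_s T VL)\<^sup>2 \<le> E * diameter K"
      using admissible_mesh_layer_width[OF adm TB] assms(4) by (simp add: E_def mult.assoc)
    then have "(\<Sum>e\<in>bedges_of T (VL K). L2sq v (bounded_region e (arcOf e)))
        \<le> C * (C4 * (mesh_s T VL)\<^sup>2) / diameter K * L2sq v K"
      using assms(4) admissible_mesh_card_bedges[OF adm K] admissible_mesh_regions_in_edge_strips[OF adm K] v
      by (intro bound[OF elem(1-4)]) simp_all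
    also have "\<dots> \<le> C * C4 * C3 * (mesh_s T VL)\<^sup>2 / mesh_h T * L2sq v K"
    proof -
      have "1 / diameter K \<le> C3 / mesh_h T"
        using elem(5-7) by (simp add: field_simps)
      moreover have "0 \<le> C * C4 * (mesh_s T VL)\<^sup>2 * L2sq v K"
        using C assms(4) L2sq_nonneg[of v K] by simp
      ultimately have "C * C4 * (mesh_s T VL)\<^sup>2 * L2sq v K * (1 / diameter K)
          \<le> C * C4 * (mesh_s T VL)\<^sup>2 * L2sq v K * (C3 / mesh_h T)"
        by (rule mult_left_mono)
      then show ?thesis
        by (simp add: algebra_simps)
    qed
    finally show "(\<Sum>e\<in>bedges_of T (VL K). L2sq v (bounded_region e (arcOf e)))
        \<le> C * C4 * C3 * (mesh_s T VL)\<^sup>2 / mesh_h T * L2sq v K" .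
  qed
qed

end
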